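(* Assume the total harvested energy is finite. The optimal value of problem (P) equals the optimal value of problem (Q): $$\max_{\{\bar p_{k,i}\}}\ \sum_{i=1}^N R(\bar p_{1,i},\bar p_{2,i})$$ subject to $\sum_{n=1}^{i}(E_{k,n}-\bar p_{k,n})\ge 0$ and $\bar p_{k,i}\ge0$ for $k=1,2$, $i=1,\dots,N$. Moreover, suppose $\{\bar p_{k,i}\}$ is optimal for (Q), and for each $i$ the pair $(\delta_{1,i},\delta_{2,i})$ attains the maximum defining $R(\bar p_{1,i},\bar p_{2,i})$. Set $p_{k,i}=\bar p_{k,i}-\delta_{k,i}+\alpha_j\delta_{j,i}$ ($j\ne k$). Then $\{p_{k,i},\delta_{k,i}\}$ is an optimal solution of (P).
   Context: Two-way channel setting. There are two nodes, $N$ unit-length slots, channel gains $h_1,h_2>0$, noise powers $\sigma_1^2,\sigma_2^2>0$, efficiencies $\alpha_1,\alpha_2\in[0,1]$, and harvested energies $E_{k,i}\ge0$. A power policy is $\{p_{k,i},\delta_{k,i}\}$. Here $p_{k,i}$ is the transmit power of $T_k$ in slot $i$, and $\delta_{k,i}$ is the energy $T_k$ sends to $T_j$ ($j\ne k$), of which $\alpha_k\delta_{k,i}$ is received. The battery state is $$S_{k,i}=\sum_{n=1}^{i}(E_{k,n}-p_{k,n}+\alpha_j\delta_{j,n}-\delta_{k,n}).$$ Let $$C(p_1,p_2)=\tfrac12\log(1+h_1p_1/\sigma_2^2)+\tfrac12\log(1+h_2p_2/\sigma_1^2).$$ Problem (P) is to maximize $\sum_i C(p_{1,i},p_{2,i})$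 subject to $S_{k,i}\ge0$, $p_{k,i}\ge0$ and $\delta_{k,i}\ge0$ for all $k,i$. For $\pi_1,\pi_2\ge0$, define $$R(\pi_1,\pi_2)=\max\{C(\pi_1-\delta_1+\alpha_2\delta_2,\ \pi_2-\delta_2+\alpha_1\delta_1):\ 0\le\delta_k\le\pi_k,\ k=1,2\}.$$ *)

theory Defs
  imports Complex_Main
begin

text \<open>Channel parameters of the two-way system: gains h1 h2, noise powers
  s1 = sigma_1^2, s2 = sigma_2^2, efficiencies a1 a2, harvested energies E1 E2
  (slot-indexed, slots 1..N).\<close>

record chan =
  h1 :: real
  h2 :: real
  s1 :: real
  s2 :: real
  a1 :: real
  a2 :: real
  E1 :: "nat \<Rightarrow> real"
  E2 :: "nat \<Rightarrow> real"

definition valid_chan :: "chan \<Rightarrow> nat \<Rightarrow> bool" where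
  "valid_chan c N \<longleftrightarrow> h1 c > 0 \<and> h2 c > 0 \<and> s1 c > 0 \<and> s2 c > 0 \<and>
     0 \<le> a1 c \<and> a1 c \<le> 1 \<and> 0 \<le> a2 c \<and> a2 c \<le> 1 \<and>
     (\<forall>i\<in>{1..N}. E1 c i \<ge> 0 \<and> E2 c i \<ge> 0)"

definition Crate :: "chan \<Rightarrow> real \<Rightarrow> real \<Rightarrow> real" where
  "Crate c p1 p2 = ln (1 + h1 c * p1 / s2 c) / 2 + ln (1 + h2 c * p2 / s1 c) / 2"

definition Rfun :: "chan \<Rightarrow> real \<Rightarrow> real \<Rightarrow> real" where
  "Rfun c \<pi>1 \<pi>2 = Sup {Crate c (\<pi>1 - d1 + a2 c * d2) (\<pi>2 - d2 + a1 c * d1) | d1 d2.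
      0 \<le> d1 \<and> d1 \<le> \<pi>1 \<and> 0 \<le> d2 \<and> d2 \<le> \<pi>2}"

definition S1 :: "chan \<Rightarrow> (nat \<Rightarrow> real) \<Rightarrow> (nat \<Rightarrow> real) \<Rightarrow> (nat \<Rightarrow> real) \<Rightarrow> nat \<Rightarrow> real" where
  "S1 c p1 d1 d2 i = (\<Sum>n=1..i. E1 c n - p1 n + a2 c * d2 n - d1 n)"

definition S2 :: "chan \<Rightarrow> (nat \<Rightarrow> real) \<Rightarrow> (nat \<Rightarrow> real) \<Rightarrow> (nat \<Rightarrow> real) \<Rightarrow> nat \<Rightarrow> real" where
  "S2 c p2 d1 d2 i = (\<Sum>n=1..i. E2 c n - p2 n + a1 c * d1 n - d2 n)"

definition feasP :: "chan \<Rightarrow> nat \<Rightarrow> (nat \<Rightarrow> real) \<Rightarrow> (nat \<Rightarrow> real) \<Rightarrow> (nat \<Rightarrow> real) \<Rightarrow> (nat \<Rightarrow> real) \<Rightarrow> bool" where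
  "feasP c N p1 p2 d1 d2 \<longleftrightarrow> (\<forall>i\<in>{1..N}.
      S1 c p1 d1 d2 i \<ge> 0 \<and> S2 c p2 d1 d2 i \<ge> 0 \<and>
      p1 i \<ge> 0 \<and> p2 i \<ge> 0 \<and> d1 i \<ge> 0 \<and> d2 i \<ge> 0)"

definition objP :: "chan \<Rightarrow> nat \<Rightarrow> (nat \<Rightarrow> real) \<Rightarrow> (nat \<Rightarrow> real) \<Rightarrow> real" where
  "objP c N p1 p2 = (\<Sum>i=1..N. Crate c (p1 i) (p2 i))"

definition optP :: "chan \<Rightarrow> nat \<Rightarrow> real" where
  "optP c N = Sup {objP c N p1 p2 | p1 p2 d1 d2. feasP c N p1 p2 d1 d2}"

definition optimalP :: "chan \<Rightarrow> nat \<Rightarrow> (nat \<Rightarrow> real) \<Rightarrow> (nat \<Rightarrow> real) \<Rightarrow> (nat \<Rightarrow> real) \<Rightarrow> (nat \<Rightarrow> real) \<Rightarrow> bool" where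
  "optimalP c N p1 p2 d1 d2 \<longleftrightarrow> feasP c N p1 p2 d1 d2 \<and>
     (\<forall>q1 q2 e1 e2. feasP c N q1 q2 e1 e2 \<longrightarrow> objP c N q1 q2 \<le> objP c N p1 p2)"

definition feasQ :: "chan \<Rightarrow> nat \<Rightarrow> (nat \<Rightarrow> real) \<Rightarrow> (nat \<Rightarrow> real) \<Rightarrow> bool" where
  "feasQ c N q1 q2 \<longleftrightarrow> (\<forall>i\<in>{1..N}.
      (\<Sum>n=1..i. E1 c n - q1 n) \<ge> 0 \<and> (\<Sum>n=1..i. E2 c n - q2 n) \<ge> 0 \<and>
      q1 i \<ge> 0 \<and> q2 i \<ge> 0)"

definition objQ :: "chan \<Rightarrow> nat \<Rightarrow> (nat \<Rightarrow> real) \<Rightarrow> (nat \<Rightarrow> real) \<Rightarrow> real" where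
  "objQ c N q1 q2 = (\<Sum>i=1..N. Rfun c (q1 i) (q2 i))"

definition optQ :: "chan \<Rightarrow> nat \<Rightarrow> real" where
  "optQ c N = Sup {objQ c N q1 q2 | q1 q2. feasQ c N q1 q2}"

definition optimalQ :: "chan \<Rightarrow> nat \<Rightarrow> (nat \<Rightarrow> real) \<Rightarrow> (nat \<Rightarrow> real) \<Rightarrow> bool" where
  "optimalQ c N q1 q2 \<longleftrightarrow> feasQ c N q1 q2 \<and>
     (\<forall>r1 r2. feasQ c N r1 r2 \<longrightarrow> objQ c N r1 r2 \<le> objQ c N q1 q2)"

end

theory Submission
  imports Defs "HOL-Analysis.Analysis"
begin

text \<open>
  Given a budget \<open>q\<close> feasible for (Q), spending it through transfers that attain \<open>R\<close> in every
  slot gives a policy for (P) with the same value, so opt(Q) \<le> opt(P), and an optimal (Q) budget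
  yields an optimal (P) policy once opt(P) \<le> opt(Q) is known. For that inequality, note that a
  (P) policy may send energy early and let it wait in the receiver's battery. The lazy policy
  postpones every transfer to the slot in which the receiver would otherwise run a deficit, and
  then sends exactly that deficit. By induction over the slots, the true batteries are dominated
  by the lazy batteries up to transfers still outstanding; hence the lazy budgets
  \<open>p\<^sub>k + g\<^sub>k - \<alpha>\<^sub>j g\<^sub>j\<close> are feasible for (Q), and since \<open>p\<close> arises from them through the
  transfers \<open>g\<close>, every slot satisfies \<open>C(p) \<le> R\<close>.
\<close>

abbreviation transfer_rate :: "chan \<Rightarrow> real \<Rightarrow> real \<Rightarrow> real \<Rightarrow> real \<Rightarrow> real" where
  "transfer_rate c \<pi>1 \<pi>2 d1 d2 \<equiv> Crate c (\<pi>1 - d1 + a2 c * d2) (\<pi>2 - d2 + a1 c * d1)"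

lemma valid_chanD:
  assumes "valid_chan c N"
  shows "0 < h1 c" "0 < h2 c" "0 < s1 c" "0 < s2 c"
    "0 \<le> a1 c" "a1 c \<le> 1" "0 \<le> a2 c" "a2 c \<le> 1"
    "\<And>i. i \<in> {1..N} \<Longrightarrow> 0 \<le> E1 c i" "\<And>i. i \<in> {1..N} \<Longrightarrow> 0 \<le> E2 c i"
  using assms by (auto simp: valid_chan_def)

lemma Crate_mono:
  assumes "valid_chan c N" "0 \<le> x1" "x1 \<le> y1" "0 \<le> x2" "x2 \<le> y2"
  shows "Crate c x1 x2 \<le> Crate c y1 y2"
proof -
  note h = valid_chanD[OF assms(1)]
  have "ln (1 + h1 c * x1 / s2 c) \<le> ln (1 + h1 c * y1 / s2 c)"
    using h assms by (intro ln_mono add_left_mono divide_right_mono mult_left_mono add_pos_nonneg) auto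
  moreover have "ln (1 + h2 c * x2 / s1 c) \<le> ln (1 + h2 c * y2 / s1 c)"
    using h assms by (intro ln_mono add_left_mono divide_right_mono mult_left_mono add_pos_nonneg) auto
  ultimately show ?thesis unfolding Crate_def by simp
qed

lemma transfer_rate_attains_max:
  assumes "valid_chan c N" "0 \<le> \<pi>1" "0 \<le> \<pi>2"
  obtains d1 d2 where "0 \<le> d1" "d1 \<le> \<pi>1" "0 \<le> d2" "d2 \<le> \<pi>2"
    "\<And>e1 e2. \<lbrakk>0 \<le> e1; e1 \<le> \<pi>1; 0 \<le> e2; e2 \<le> \<pi>2\<rbrakk> \<Longrightarrow>
       transfer_rate c \<pi>1 \<pi>2 e1 e2 \<le> transfer_rate c \<pi>1 \<pi>2 d1 d2"
proof -
  note h = valid_chanD[OF assms(1)]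
  define K where "K = {0..\<pi>1} \<times> {0..\<pi>2}"
  have "continuous_on K (\<lambda>z. transfer_rate c \<pi>1 \<pi>2 (fst z) (snd z))"
  proof -
    have "1 + h1 c * (\<pi>1 - fst z + a2 c * snd z) / s2 c \<noteq> 0"
      and "1 + h2 c * (\<pi>2 - snd z + a1 c * fst z) / s1 c \<noteq> 0" if "z \<in> K" for z
      using that h by (auto simp: K_def intro!: add_pos_nonneg less_imp_neq[symmetric])
    then show ?thesis
      unfolding Crate_def using h by (intro continuous_intros) auto
  qed
  moreover have "compact K" "K \<noteq> {}"
    using assms by (auto simp: K_def intro: compact_Times)
  ultimately obtain z where "z \<in> K" "\<forall>y\<in>K. transfer_rate c \<pi>1 \<pi>2 (fst y) (snd y)
      \<le> transfer_rate c \<pi>1 \<pi>2 (fst z) (snd z)"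
    using continuous_attains_sup by blast
  then show ?thesis
    by (intro that[of "fst z" "snd z"]) (auto simp: K_def)
qed

lemma Rfun_eq_max:
  assumes "0 \<le> d1" "d1 \<le> \<pi>1" "0 \<le> d2" "d2 \<le> \<pi>2"
    and "\<And>e1 e2. \<lbrakk>0 \<le> e1; e1 \<le> \<pi>1; 0 \<le> e2; e2 \<le> \<pi>2\<rbrakk> \<Longrightarrow>
       transfer_rate c \<pi>1 \<pi>2 e1 e2 \<le> transfer_rate c \<pi>1 \<pi>2 d1 d2"
  shows "Rfun c \<pi>1 \<pi>2 = transfer_rate c \<pi>1 \<pi>2 d1 d2"
  unfolding Rfun_def using assms by (intro cSup_eq_maximum) auto

lemma Rfun_attained:
  assumes "valid_chan c N" "0 \<le> \<pi>1" "0 \<le> \<pi>2"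
  obtains d1 d2 where "0 \<le> d1" "d1 \<le> \<pi>1" "0 \<le> d2" "d2 \<le> \<pi>2"
    "transfer_rate c \<pi>1 \<pi>2 d1 d2 = Rfun c \<pi>1 \<pi>2"
  using transfer_rate_attains_max[OF assms] Rfun_eq_max by metis

lemma transfer_rate_le_Rfun:
  assumes "valid_chan c N" "0 \<le> e1" "e1 \<le> \<pi>1" "0 \<le> e2" "e2 \<le> \<pi>2"
  shows "transfer_rate c \<pi>1 \<pi>2 e1 e2 \<le> Rfun c \<pi>1 \<pi>2"
proof -
  have "0 \<le> \<pi>1" "0 \<le> \<pi>2" using assms by linarith+
  then obtain d1 d2 where d: "0 \<le> d1" "d1 \<le> \<pi>1" "0 \<le> d2" "d2 \<le> \<pi>2"
    "\<And>e1 e2. \<lbrakk>0 \<le> e1; e1 \<le> \<pi>1; 0 \<le> e2; e2 \<le> \<pi>2\<rbrakk> \<Longrightarrow>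
       transfer_rate c \<pi>1 \<pi>2 e1 e2 \<le> transfer_rate c \<pi>1 \<pi>2 d1 d2"
    using transfer_rate_attains_max[OF assms(1)] by blast
  have "transfer_rate c \<pi>1 \<pi>2 e1 e2 \<le> transfer_rate c \<pi>1 \<pi>2 d1 d2"
    using d(5) assms(2-) .
  also have "\<dots> = Rfun c \<pi>1 \<pi>2"
    using Rfun_eq_max[OF d] by simp
  finally show ?thesis .
qed

text \<open>The energy to send at efficiency \<open>A\<close> so that the receiver's deficit \<open>-x\<close> is exactly
  covered. For \<open>A = 0\<close> the division yields the junk value 0; \<open>deficit_cover_step_neg\<close> shows
  that a deficit which some policy survives forces \<open>A > 0\<close>.\<close>

definition deficit_cover :: "real \<Rightarrow> real \<Rightarrow> real" where
  "deficit_cover A x = (if x < 0 then - x / A else 0)"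

text \<open>In the
  invariant below, \<open>b\<close> are the lazy batteries, \<open>r\<close> the true ones, and \<open>t\<close> the transfers the given
  policy has made ahead of the lazy one.\<close>

definition transfer_reachable :: "real \<Rightarrow> real \<Rightarrow> real \<Rightarrow> real \<Rightarrow> real \<Rightarrow> real \<Rightarrow> bool" where
  "transfer_reachable A1 A2 b1 b2 r1 r2 \<longleftrightarrow>
     (\<exists>t1 t2. 0 \<le> t1 \<and> 0 \<le> t2 \<and> r1 \<le> b1 - t1 + A2 * t2 \<and> r2 \<le> b2 - t2 + A1 * t1)"

lemma transfer_reachable_trivial:
  "r1 \<le> b1 \<Longrightarrow> r2 \<le> b2 \<Longrightarrow> transfer_reachable A1 A2 b1 b2 r1 r2"
  unfolding transfer_reachable_def by (intro exI[of _ 0]) simp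

lemma transfer_reachable_swap:
  "transfer_reachable A1 A2 b1 b2 r1 r2 \<longleftrightarrow> transfer_reachable A2 A1 b2 b1 r2 r1"
  unfolding transfer_reachable_def by blast

lemma transfer_reachable_add:
  assumes "transfer_reachable A1 A2 b1 b2 r1 r2" "0 \<le> d1" "0 \<le> d2"
  shows "transfer_reachable A1 A2 (b1 + e1) (b2 + e2)
           (r1 + e1 - d1 + A2 * d2) (r2 + e2 - d2 + A1 * d1)"
proof -
  obtain t1 t2 where "0 \<le> t1" "0 \<le> t2" "r1 \<le> b1 - t1 + A2 * t2" "r2 \<le> b2 - t2 + A1 * t1"
    using assms(1) unfolding transfer_reachable_def by blast
  then show ?thesis
    unfolding transfer_reachable_def using assms(2,3)
    by (intro exI[of _ "t1 + d1"] exI[of _ "t2 + d2"]) (auto simp: algebra_simps)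
qed

lemma deficit_cover_step_neg:
  assumes "0 \<le> A1" "A1 \<le> 1" "0 \<le> A2" "A2 \<le> 1" "x2 < 0" "0 \<le> r1" "0 \<le> r2"
    and "transfer_reachable A1 A2 x1 x2 r1 r2"
  shows "0 < A1 \<and> 0 \<le> x1 \<and> 0 \<le> x1 + x2 / A1 \<and> transfer_reachable A1 A2 (x1 + x2 / A1) 0 r1 r2"
proof -
  obtain t1 t2 where t: "0 \<le> t1" "0 \<le> t2" "r1 \<le> x1 - t1 + A2 * t2" "r2 \<le> x2 - t2 + A1 * t1"
    using assms(8) unfolding transfer_reachable_def by blast
  have "t2 < A1 * t1" using t assms(5,7) by linarith
  then have A1: "0 < A1"
    using t(1,2) assms(1) by (metis less_eq_real_def linorder_not_less mult_not_zero)
  define u where "u = t1 + x2 / A1"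
  have Au: "A1 * u = A1 * t1 + x2" using A1 by (simp add: u_def algebra_simps)
  have "t2 \<le> A1 * u" using Au t(4) assms(7) by linarith
  also have "\<dots> \<le> u"
  proof -
    have "0 \<le> A1 * u" using \<open>t2 \<le> A1 * u\<close> t(2) by linarith
    then have "0 \<le> u" using A1 by (simp add: zero_le_mult_iff)
    then show ?thesis using assms(1,2) by (rule mult_left_le_one_le)
  qed
  finally have "t2 \<le> u" .
  have "A2 * t2 \<le> t2" using t(2) assms(3,4) by (simp add: mult_left_le_one_le)
  then have "0 \<le> x1 + x2 / A1"
    using t(3) assms(6) \<open>t2 \<le> u\<close> by (simp add: u_def)
  moreover have "x2 / A1 < 0" using A1 assms(5) by (simp add: divide_neg_pos)
  moreover have "transfer_reachable A1 A2 (x1 + x2 / A1) 0 r1 r2"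
    unfolding transfer_reachable_def using t Au \<open>t2 \<le> u\<close>
    by (intro exI[of _ u] exI[of _ t2]) (auto simp: u_def)
  ultimately show ?thesis using A1 by linarith
qed

lemma deficit_cover_step:
  assumes "0 \<le> A1" "A1 \<le> 1" "0 \<le> A2" "A2 \<le> 1" "0 \<le> r1" "0 \<le> r2"
    and "transfer_reachable A1 A2 x1 x2 r1 r2"
  defines "g1 \<equiv> deficit_cover A1 x2" and "g2 \<equiv> deficit_cover A2 x1"
  shows "0 \<le> g1 \<and> 0 \<le> g2 \<and> A1 * g1 \<le> max 0 (- x2) \<and> A2 * g2 \<le> max 0 (- x1) \<and>
    0 \<le> x1 - g1 + A2 * g2 \<and> 0 \<le> x2 - g2 + A1 * g1 \<and>
    transfer_reachable A1 A2 (x1 - g1 + A2 * g2) (x2 - g2 + A1 * g1) r1 r2"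
proof (cases "x2 < 0")
  case True
  with deficit_cover_step_neg[OF assms(1-4) True assms(5-7)] show ?thesis
    by (auto dest: divide_neg_pos simp: g1_def g2_def deficit_cover_def)
next
  case False
  show ?thesis
  proof (cases "x1 < 0")
    case True
    have "transfer_reachable A2 A1 x2 x1 r2 r1"
      using assms(7) by (simp add: transfer_reachable_swap)
    from deficit_cover_step_neg[OF assms(3,4,1,2) True assms(6,5) this] True False show ?thesis
      by (auto dest: divide_neg_pos simp: g1_def g2_def deficit_cover_def transfer_reachable_swap)
  next
    case False
    with \<open>\<not> x2 < 0\<close> assms(7) show ?thesis by (simp add: g1_def g2_def deficit_cover_def)
  qed
qed

text \<open>Slots are numbered from 1; the surplus and transfer of slot \<open>i\<close> refer to the battery after
  slot \<open>i - 1\<close>, so their values at \<open>i = 0\<close> are junk.\<close>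

fun lazy_battery :: "chan \<Rightarrow> (nat \<Rightarrow> real) \<Rightarrow> (nat \<Rightarrow> real) \<Rightarrow> nat \<Rightarrow> real \<times> real" where
  "lazy_battery c p1 p2 0 = (0, 0)"
| "lazy_battery c p1 p2 (Suc i) =
    (let x1 = fst (lazy_battery c p1 p2 i) + E1 c (Suc i) - p1 (Suc i);
         x2 = snd (lazy_battery c p1 p2 i) + E2 c (Suc i) - p2 (Suc i)
     in (x1 - deficit_cover (a1 c) x2 + a2 c * deficit_cover (a2 c) x1,
         x2 - deficit_cover (a2 c) x1 + a1 c * deficit_cover (a1 c) x2))"

definition lazy_surplus1 :: "chan \<Rightarrow> (nat \<Rightarrow> real) \<Rightarrow> (nat \<Rightarrow> real) \<Rightarrow> nat \<Rightarrow> real" where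
  "lazy_surplus1 c p1 p2 i = fst (lazy_battery c p1 p2 (i - 1)) + E1 c i - p1 i"

definition lazy_surplus2 :: "chan \<Rightarrow> (nat \<Rightarrow> real) \<Rightarrow> (nat \<Rightarrow> real) \<Rightarrow> nat \<Rightarrow> real" where
  "lazy_surplus2 c p1 p2 i = snd (lazy_battery c p1 p2 (i - 1)) + E2 c i - p2 i"

definition lazy_transfer1 :: "chan \<Rightarrow> (nat \<Rightarrow> real) \<Rightarrow> (nat \<Rightarrow> real) \<Rightarrow> nat \<Rightarrow> real" where
  "lazy_transfer1 c p1 p2 i = deficit_cover (a1 c) (lazy_surplus2 c p1 p2 i)"

definition lazy_transfer2 :: "chan \<Rightarrow> (nat \<Rightarrow> real) \<Rightarrow> (nat \<Rightarrow> real) \<Rightarrow> nat \<Rightarrow> real" where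
  "lazy_transfer2 c p1 p2 i = deficit_cover (a2 c) (lazy_surplus1 c p1 p2 i)"

definition lazy_budget1 :: "chan \<Rightarrow> (nat \<Rightarrow> real) \<Rightarrow> (nat \<Rightarrow> real) \<Rightarrow> nat \<Rightarrow> real" where
  "lazy_budget1 c p1 p2 i = p1 i + lazy_transfer1 c p1 p2 i - a2 c * lazy_transfer2 c p1 p2 i"

definition lazy_budget2 :: "chan \<Rightarrow> (nat \<Rightarrow> real) \<Rightarrow> (nat \<Rightarrow> real) \<Rightarrow> nat \<Rightarrow> real" where
  "lazy_budget2 c p1 p2 i = p2 i + lazy_transfer2 c p1 p2 i - a1 c * lazy_transfer1 c p1 p2 i"

lemma lazy_battery_Suc:
  "lazy_battery c p1 p2 (Suc i) =
    (lazy_surplus1 c p1 p2 (Suc i) - lazy_transfer1 c p1 p2 (Suc i) + a2 c * lazy_transfer2 c p1 p2 (Suc i),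
     lazy_surplus2 c p1 p2 (Suc i) - lazy_transfer2 c p1 p2 (Suc i) + a1 c * lazy_transfer1 c p1 p2 (Suc i))"
  by (simp add: Let_def lazy_surplus1_def lazy_surplus2_def lazy_transfer1_def lazy_transfer2_def)

declare lazy_battery.simps(2) [simp del]

lemma lazy_battery_eq_sum:
  "fst (lazy_battery c p1 p2 i) = (\<Sum>n=1..i. E1 c n - lazy_budget1 c p1 p2 n)"
  "snd (lazy_battery c p1 p2 i) = (\<Sum>n=1..i. E2 c n - lazy_budget2 c p1 p2 n)"
  by (induction i)
    (simp_all add: lazy_battery_Suc lazy_surplus1_def lazy_surplus2_def
      lazy_budget1_def lazy_budget2_def algebra_simps)

definition lazy_invariant ::
    "chan \<Rightarrow> (nat \<Rightarrow> real) \<Rightarrow> (nat \<Rightarrow> real) \<Rightarrow> (nat \<Rightarrow> real) \<Rightarrow> (nat \<Rightarrow> real) \<Rightarrow> nat \<Rightarrow> bool" where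
  "lazy_invariant c p1 p2 d1 d2 i \<longleftrightarrow>
     0 \<le> fst (lazy_battery c p1 p2 i) \<and> 0 \<le> snd (lazy_battery c p1 p2 i) \<and>
     transfer_reachable (a1 c) (a2 c) (fst (lazy_battery c p1 p2 i)) (snd (lazy_battery c p1 p2 i))
       (S1 c p1 d1 d2 i) (S2 c p2 d1 d2 i)"

lemma lazy_slot:
  assumes v: "valid_chan c N" and f: "feasP c N p1 p2 d1 d2" and i: "i \<in> {1..N}"
    and inv: "lazy_invariant c p1 p2 d1 d2 (i - 1)"
  shows "0 \<le> lazy_transfer1 c p1 p2 i" "0 \<le> lazy_transfer2 c p1 p2 i"
    "a1 c * lazy_transfer1 c p1 p2 i \<le> p2 i" "a2 c * lazy_transfer2 c p1 p2 i \<le> p1 i"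
    "lazy_invariant c p1 p2 d1 d2 i"
proof -
  obtain j where j: "i = Suc j" using i by (cases i) auto
  note a = valid_chanD[OF v]
  have fi: "0 \<le> S1 c p1 d1 d2 i" "0 \<le> S2 c p2 d1 d2 i" "0 \<le> p1 i" "0 \<le> p2 i" "0 \<le> d1 i" "0 \<le> d2 i"
    using f i unfolding feasP_def by blast+
  let ?x1 = "lazy_surplus1 c p1 p2 i" and ?x2 = "lazy_surplus2 c p1 p2 i"
  have S: "S1 c p1 d1 d2 i = S1 c p1 d1 d2 j + (E1 c i - p1 i) - d1 i + a2 c * d2 i"
    "S2 c p2 d1 d2 i = S2 c p2 d1 d2 j + (E2 c i - p2 i) - d2 i + a1 c * d1 i"
    unfolding S1_def S2_def j by simp_all
  have "transfer_reachable (a1 c) (a2 c)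
      (fst (lazy_battery c p1 p2 j) + (E1 c i - p1 i)) (snd (lazy_battery c p1 p2 j) + (E2 c i - p2 i))
      (S1 c p1 d1 d2 i) (S2 c p2 d1 d2 i)"
    unfolding S using inv fi(5,6) unfolding lazy_invariant_def j
    by (intro transfer_reachable_add) auto
  then have R: "transfer_reachable (a1 c) (a2 c) ?x1 ?x2 (S1 c p1 d1 d2 i) (S2 c p2 d1 d2 i)"
    unfolding lazy_surplus1_def lazy_surplus2_def j by (simp add: add_diff_eq)
  from deficit_cover_step[OF a(5-8) fi(1,2) R] show
    "0 \<le> lazy_transfer1 c p1 p2 i" "0 \<le> lazy_transfer2 c p1 p2 i"
    "lazy_invariant c p1 p2 d1 d2 i"
    unfolding lazy_invariant_def j lazy_battery_Suc
    by (simp_all add: lazy_transfer1_def lazy_transfer2_def)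
  have "- ?x1 \<le> p1 i" "- ?x2 \<le> p2 i"
    using inv a(9,10)[OF i] unfolding lazy_invariant_def lazy_surplus1_def lazy_surplus2_def by simp_all
  with deficit_cover_step[OF a(5-8) fi(1,2) R] fi(3,4) show
    "a1 c * lazy_transfer1 c p1 p2 i \<le> p2 i" "a2 c * lazy_transfer2 c p1 p2 i \<le> p1 i"
    by (auto simp: lazy_transfer1_def lazy_transfer2_def)
qed

lemma lazy_invariant_holds:
  assumes "valid_chan c N" "feasP c N p1 p2 d1 d2"
  shows "i \<le> N \<Longrightarrow> lazy_invariant c p1 p2 d1 d2 i"
proof (induction i)
  case 0
  show ?case
    unfolding lazy_invariant_def S1_def S2_def by (simp add: transfer_reachable_trivial)
next
  case (Suc j)
  then have "Suc j \<in> {1..N}" "lazy_invariant c p1 p2 d1 d2 (Suc j - 1)" by simp_all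
  then show ?case by (rule lazy_slot(5)[OF assms])
qed

lemma feasP_imp_lazy_feasQ:
  assumes v: "valid_chan c N" and f: "feasP c N p1 p2 d1 d2"
  shows "feasQ c N (lazy_budget1 c p1 p2) (lazy_budget2 c p1 p2)"
    and "objP c N p1 p2 \<le> objQ c N (lazy_budget1 c p1 p2) (lazy_budget2 c p1 p2)"
proof -
  let ?q1 = "lazy_budget1 c p1 p2" and ?q2 = "lazy_budget2 c p1 p2"
  let ?g1 = "lazy_transfer1 c p1 p2" and ?g2 = "lazy_transfer2 c p1 p2"
  have slot: "0 \<le> ?g1 i" "0 \<le> ?g2 i" "a1 c * ?g1 i \<le> p2 i" "a2 c * ?g2 i \<le> p1 i"
    "lazy_invariant c p1 p2 d1 d2 i" if i: "i \<in> {1..N}" for i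
  proof -
    have "i - 1 \<le> N" using i by auto
    then show "0 \<le> ?g1 i" "0 \<le> ?g2 i" "a1 c * ?g1 i \<le> p2 i" "a2 c * ?g2 i \<le> p1 i"
      "lazy_invariant c p1 p2 d1 d2 i"
      using lazy_slot[OF v f i lazy_invariant_holds[OF v f]] by blast+
  qed
  have box: "0 \<le> ?g1 i" "?g1 i \<le> ?q1 i" "0 \<le> ?g2 i" "?g2 i \<le> ?q2 i" if "i \<in> {1..N}" for i
    using slot[OF that] by (simp_all add: lazy_budget1_def lazy_budget2_def)
  show "feasQ c N ?q1 ?q2"
    unfolding feasQ_def
  proof
    fix i assume i: "i \<in> {1..N}"
    then show "0 \<le> (\<Sum>n=1..i. E1 c n - ?q1 n) \<and> 0 \<le> (\<Sum>n=1..i. E2 c n - ?q2 n) \<and>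
        0 \<le> ?q1 i \<and> 0 \<le> ?q2 i"
      using slot[OF i] box[OF i] unfolding lazy_invariant_def lazy_battery_eq_sum by linarith
  qed
  show "objP c N p1 p2 \<le> objQ c N ?q1 ?q2"
    unfolding objP_def objQ_def
  proof (rule sum_mono)
    fix i assume i: "i \<in> {1..N}"
    have "Crate c (p1 i) (p2 i) = transfer_rate c (?q1 i) (?q2 i) (?g1 i) (?g2 i)"
      by (simp add: lazy_budget1_def lazy_budget2_def)
    also have "\<dots> \<le> Rfun c (?q1 i) (?q2 i)"
      using box[OF i] by (rule transfer_rate_le_Rfun[OF v])
    finally show "Crate c (p1 i) (p2 i) \<le> Rfun c (?q1 i) (?q2 i)" .
  qed
qed

definition optimal_transfers ::
    "chan \<Rightarrow> nat \<Rightarrow> (nat \<Rightarrow> real) \<Rightarrow> (nat \<Rightarrow> real) \<Rightarrow> (nat \<Rightarrow> real) \<Rightarrow> (nat \<Rightarrow> real) \<Rightarrow> bool" where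
  "optimal_transfers c N q1 q2 d1 d2 \<longleftrightarrow> (\<forall>i\<in>{1..N}.
     0 \<le> d1 i \<and> d1 i \<le> q1 i \<and> 0 \<le> d2 i \<and> d2 i \<le> q2 i \<and>
     transfer_rate c (q1 i) (q2 i) (d1 i) (d2 i) = Rfun c (q1 i) (q2 i))"

lemma optimal_transfers_exist:
  assumes v: "valid_chan c N" and f: "feasQ c N q1 q2"
  obtains d1 d2 where "optimal_transfers c N q1 q2 d1 d2"
proof -
  have "\<exists>d. 0 \<le> fst d \<and> fst d \<le> q1 i \<and> 0 \<le> snd d \<and> snd d \<le> q2 i \<and>
      transfer_rate c (q1 i) (q2 i) (fst d) (snd d) = Rfun c (q1 i) (q2 i)" if "i \<in> {1..N}" for i
  proof -
    have "0 \<le> q1 i" "0 \<le> q2 i" using f that unfolding feasQ_def by auto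
    then obtain e1 e2 where "0 \<le> e1" "e1 \<le> q1 i" "0 \<le> e2" "e2 \<le> q2 i"
      "transfer_rate c (q1 i) (q2 i) e1 e2 = Rfun c (q1 i) (q2 i)"
      using Rfun_attained[OF v] by metis
    then show ?thesis by (intro exI[of _ "(e1, e2)"]) simp
  qed
  then obtain D where "\<forall>i\<in>{1..N}. 0 \<le> fst (D i) \<and> fst (D i) \<le> q1 i \<and> 0 \<le> snd (D i) \<and>
      snd (D i) \<le> q2 i \<and> transfer_rate c (q1 i) (q2 i) (fst (D i)) (snd (D i)) = Rfun c (q1 i) (q2 i)"
    by metis
  then show ?thesis
    by (intro that[of "fst \<circ> D" "snd \<circ> D"]) (simp add: optimal_transfers_def)
qed

lemma optimal_transfers_feasP:
  assumes v: "valid_chan c N" and f: "feasQ c N q1 q2" and d: "optimal_transfers c N q1 q2 d1 d2"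
  shows "feasP c N (\<lambda>i. q1 i - d1 i + a2 c * d2 i) (\<lambda>i. q2 i - d2 i + a1 c * d1 i) d1 d2"
    and "objP c N (\<lambda>i. q1 i - d1 i + a2 c * d2 i) (\<lambda>i. q2 i - d2 i + a1 c * d1 i) = objQ c N q1 q2"
proof -
  note a = valid_chanD[OF v]
  show "feasP c N (\<lambda>i. q1 i - d1 i + a2 c * d2 i) (\<lambda>i. q2 i - d2 i + a1 c * d1 i) d1 d2"
    unfolding feasP_def
  proof
    fix i assume i: "i \<in> {1..N}"
    have "S1 c (\<lambda>i. q1 i - d1 i + a2 c * d2 i) d1 d2 i = (\<Sum>n=1..i. E1 c n - q1 n)"
      "S2 c (\<lambda>i. q2 i - d2 i + a1 c * d1 i) d1 d2 i = (\<Sum>n=1..i. E2 c n - q2 n)"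
      unfolding S1_def S2_def by (simp_all add: algebra_simps)
    moreover have "0 \<le> a2 c * d2 i" "0 \<le> a1 c * d1 i"
      using d i a(5,7) by (auto simp: optimal_transfers_def)
    ultimately show "0 \<le> S1 c (\<lambda>i. q1 i - d1 i + a2 c * d2 i) d1 d2 i \<and>
        0 \<le> S2 c (\<lambda>i. q2 i - d2 i + a1 c * d1 i) d1 d2 i \<and>
        0 \<le> q1 i - d1 i + a2 c * d2 i \<and> 0 \<le> q2 i - d2 i + a1 c * d1 i \<and> 0 \<le> d1 i \<and> 0 \<le> d2 i"
      using f d i unfolding feasQ_def optimal_transfers_def by auto
  qed
  show "objP c N (\<lambda>i. q1 i - d1 i + a2 c * d2 i) (\<lambda>i. q2 i - d2 i + a1 c * d1 i) = objQ c N q1 q2"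
    using d unfolding objP_def objQ_def optimal_transfers_def by (intro sum.cong) auto
qed

lemma prefix_budget_le_total:
  fixes E q :: "nat \<Rightarrow> real"
  assumes "\<forall>i\<in>{1..N}. 0 \<le> (\<Sum>n=1..i. E n - q n) \<and> 0 \<le> q i" "\<forall>i\<in>{1..N}. 0 \<le> E i"
    and i: "i \<in> {1..N}"
  shows "q i \<le> (\<Sum>n=1..N. E n)"
proof -
  have "q i \<le> (\<Sum>n=1..i. q n)"
    by (rule member_le_sum) (use assms in auto)
  also have "\<dots> \<le> (\<Sum>n=1..i. E n)"
    using assms(1) i by (simp add: sum_subtractf)
  also have "\<dots> \<le> (\<Sum>n=1..N. E n)"
    by (rule sum_mono2) (use assms in auto)
  finally show ?thesis .
qed

lemma objQ_le_total_harvest: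
  assumes v: "valid_chan c N" and f: "feasQ c N q1 q2"
  defines "M \<equiv> (\<Sum>n=1..N. E1 c n) + (\<Sum>n=1..N. E2 c n)"
  shows "objQ c N q1 q2 \<le> real N * Crate c M M"
proof -
  note a = valid_chanD[OF v]
  obtain d1 d2 where d: "optimal_transfers c N q1 q2 d1 d2"
    using optimal_transfers_exist[OF v f] .
  have "Rfun c (q1 i) (q2 i) \<le> Crate c M M" if i: "i \<in> {1..N}" for i
  proof -
    have "q1 i \<le> (\<Sum>n=1..N. E1 c n)"
      by (rule prefix_budget_le_total[of N]) (use f a(9) i in \<open>auto simp: feasQ_def\<close>)
    moreover have "q2 i \<le> (\<Sum>n=1..N. E2 c n)"
      by (rule prefix_budget_le_total[of N]) (use f a(10) i in \<open>auto simp: feasQ_def\<close>)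
    moreover have "0 \<le> (\<Sum>n=1..N. E1 c n)" "0 \<le> (\<Sum>n=1..N. E2 c n)"
      using a(9,10) by (auto intro: sum_nonneg)
    moreover have di: "0 \<le> d1 i" "d1 i \<le> q1 i" "0 \<le> d2 i" "d2 i \<le> q2 i"
      using d i by (auto simp: optimal_transfers_def)
    moreover have "a2 c * d2 i \<le> d2 i" "a1 c * d1 i \<le> d1 i" "0 \<le> a2 c * d2 i" "0 \<le> a1 c * d1 i"
      using di a(5-8) by (auto simp: mult_left_le_one_le)
    ultimately have "transfer_rate c (q1 i) (q2 i) (d1 i) (d2 i) \<le> Crate c M M"
      unfolding M_def by (intro Crate_mono[OF v]) linarith+
    then show ?thesis using d i by (simp add: optimal_transfers_def)
  qed
  then have "objQ c N q1 q2 \<le> of_nat (card {1..N}) * Crate c M M"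
    unfolding objQ_def by (rule sum_bounded_above)
  then show ?thesis by simp
qed

lemma cSup_eq_cSup_of_cofinal_subset:
  fixes A B :: "'a::conditionally_complete_lattice set"
  assumes "B \<noteq> {}" "bdd_above B" "B \<subseteq> A" "\<And>a. a \<in> A \<Longrightarrow> \<exists>b\<in>B. a \<le> b"
  shows "Sup A = Sup B"
proof (rule antisym)
  show "Sup A \<le> Sup B"
    by (rule cSup_mono) (use assms in auto)
  obtain M where "\<And>b. b \<in> B \<Longrightarrow> b \<le> M"
    using assms(2) unfolding bdd_above_def by blast
  then have "bdd_above A"
    using assms(4) by (meson bdd_aboveI order_trans)
  then show "Sup B \<le> Sup A"
    by (rule cSup_subset_mono[OF assms(1) _ assms(3)])
qed

lemma optP_eq_optQ:
  assumes v: "valid_chan c N"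
  shows "optP c N = optQ c N"
  unfolding optP_def optQ_def
proof (rule cSup_eq_cSup_of_cofinal_subset)
  have "feasQ c N (\<lambda>_. 0) (\<lambda>_. 0)"
    using valid_chanD(9,10)[OF v] by (auto simp: feasQ_def intro!: sum_nonneg)
  then show "{objQ c N q1 q2 | q1 q2. feasQ c N q1 q2} \<noteq> {}" by blast
  show "bdd_above {objQ c N q1 q2 | q1 q2. feasQ c N q1 q2}"
    using objQ_le_total_harvest[OF v] unfolding bdd_above_def by blast
  show "{objQ c N q1 q2 | q1 q2. feasQ c N q1 q2} \<subseteq> {objP c N p1 p2 | p1 p2 d1 d2. feasP c N p1 p2 d1 d2}"
  proof clarify
    fix q1 q2 assume f: "feasQ c N q1 q2"
    obtain d1 d2 where d: "optimal_transfers c N q1 q2 d1 d2"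
      using optimal_transfers_exist[OF v f] .
    show "\<exists>p1 p2 d1 d2. objQ c N q1 q2 = objP c N p1 p2 \<and> feasP c N p1 p2 d1 d2"
      using optimal_transfers_feasP[OF v f d]
      by (intro exI[of _ "\<lambda>i. q1 i - d1 i + a2 c * d2 i"] exI[of _ "\<lambda>i. q2 i - d2 i + a1 c * d1 i"]
          exI[of _ d1] exI[of _ d2]) simp
  qed
  show "\<exists>b\<in>{objQ c N q1 q2 | q1 q2. feasQ c N q1 q2}. a \<le> b"
    if "a \<in> {objP c N p1 p2 | p1 p2 d1 d2. feasP c N p1 p2 d1 d2}" for a
  proof -
    from that obtain p1 p2 d1 d2 where "a = objP c N p1 p2" "feasP c N p1 p2 d1 d2" by blast
    with feasP_imp_lazy_feasQ[OF v this(2)] show ?thesis by blast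
  qed
qed

lemma optimalQ_imp_optimalP:
  assumes v: "valid_chan c N" and q: "optimalQ c N q1 q2" and d: "optimal_transfers c N q1 q2 d1 d2"
  shows "optimalP c N (\<lambda>i. q1 i - d1 i + a2 c * d2 i) (\<lambda>i. q2 i - d2 i + a1 c * d1 i) d1 d2"
proof -
  have f: "feasQ c N q1 q2" using q unfolding optimalQ_def by simp
  have "objP c N r1 r2 \<le> objQ c N q1 q2" if "feasP c N r1 r2 e1 e2" for r1 r2 e1 e2
    using feasP_imp_lazy_feasQ[OF v that] q unfolding optimalQ_def by (meson order_trans)
  then show ?thesis
    using optimal_transfers_feasP[OF v f d] unfolding optimalP_def by simp
qed

theorem mainTheorem4:
  assumes "valid_chan c N"
  shows "optP c N = optQ c N \<and>
    (\<forall>q1 q2 d1 d2. optimalQ c N q1 q2 \<longrightarrow>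
       (\<forall>i\<in>{1..N}. 0 \<le> d1 i \<and> d1 i \<le> q1 i \<and> 0 \<le> d2 i \<and> d2 i \<le> q2 i \<and>
          Crate c (q1 i - d1 i + a2 c * d2 i) (q2 i - d2 i + a1 c * d1 i) = Rfun c (q1 i) (q2 i)) \<longrightarrow>
       optimalP c N (\<lambda>i. q1 i - d1 i + a2 c * d2 i) (\<lambda>i. q2 i - d2 i + a1 c * d1 i) d1 d2)"
proof (intro conjI allI impI)
  show "optP c N = optQ c N" by (rule optP_eq_optQ[OF assms])
  fix q1 q2 d1 d2
  assume q: "optimalQ c N q1 q2" and d: "\<forall>i\<in>{1..N}. 0 \<le> d1 i \<and> d1 i \<le> q1 i \<and> 0 \<le> d2 i \<and> d2 i \<le> q2 i \<and>
    Crate c (q1 i - d1 i + a2 c * d2 i) (q2 i - d2 i + a1 c * d1 i) = Rfun c (q1 i) (q2 i)"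
  show "optimalP c N (\<lambda>i. q1 i - d1 i + a2 c * d2 i) (\<lambda>i. q2 i - d2 i + a1 c * d1 i) d1 d2"
    by (rule optimalQ_imp_optimalP[OF assms q d[folded optimal_transfers_def]])
qed

end
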